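(* Let $\alpha,\beta,\gamma\in\mathbb{R}$, $s_1,s_2\in S_X$, $p_0\in[0,1]$ and $\phi>0$, and write $f_i(y):=\alpha u_X(s_i,y)+\beta u_Y(s_i,y)+\gamma$. Suppose that for every $y\in S_Y$, $$-\frac{1-(1-\lambda)p_0}{\phi}\le f_1(y)\le-\frac{(1-\lambda)(1-p_0)}{\phi},\qquad \frac{(1-\lambda)p_0}{\phi}\le f_2(y)\le\frac{\lambda+(1-\lambda)p_0}{\phi}.$$ Define $p(s_1,y):=\frac{1}{\lambda}\big(\phi f_1(y)-(1-\lambda)p_0+1\big)$ and $p(s_2,y):=\frac{1}{\lambda}\big(\phi f_2(y)-(1-\lambda)p_0\big)$ (these lie in $[0,1]$), and let player $X$ use the memory-one strategy with initial action $\sigma_X^0=p_0\delta_{s_1}+(1-p_0)\delta_{s_2}$ and $\sigma_X[x,y]=p(x,y)\delta_{s_1}+(1-p(x,y))\delta_{s_2}$ for $x\in\{s_1,s_2\}$, $y\in S_Y$ (so $X$ only ever plays $s_1$ or $s_2$). Then for every behavioral strategy of $Y$, $\alpha\pi_X+\beta\pi_Y+\gamma=0$.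
   Context: Standing framework. Let $S_X,S_Y$ be measurable spaces (action spaces of players $X$ and $Y$), $u_X,u_Y:S_X\times S_Y\to\mathbb{R}$ bounded measurable payoff functions, and $\lambda\in(0,1)$ a discount factor. Histories: $\mathcal{H}^T=(S_X\times S_Y)^T$, $\mathcal{H}^0=\{\varnothing\}$, $\mathcal{H}=\bigsqcup_T\mathcal{H}^T$. A behavioral strategy for a player is a Markov kernel from $\mathcal{H}$ to that player's action space. A memory-one strategy for $X$ is given by an initial probability measure $\sigma_X^0$ on $S_X$ and a Markov kernel $(x,y)\mapsto\sigma_X[x,y]$ from $S_X\times S_Y$ to $S_X$, applied to the last action pair. Given strategies, let $\mu_0=\sigma_X[\varnothing]\otimes\sigma_Y[\varnothing]$ and $\mu_t(E'\times E)=\int_{E'}(\sigma_X[h]\otimes\sigma_Y[h])(E)\,d\mu_{t-1}(h)$ on $\mathcal{H}^{t+1}$; let $\nu_t(E)=\mu_t(\mathcal{H}^t\times E)$. Expected payoffs: $\pi_X=(1-\lambda)\sum_{t\ge0}\lambda^t\int u_X\,d\nu_t$, $\pi_Y=(1-\lambda)\sum_{t\ge0}\lambda^t\int u_Y\,d\nu_t$. $\delta_s$ denotes the Dirac measure at $s$. *)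

theory Defs
  imports "HOL-Probability.Probability"
begin

definition hist_space :: "'x measure \<Rightarrow> 'y measure \<Rightarrow> nat \<Rightarrow> (nat \<Rightarrow> 'x \<times> 'y) measure" where
  "hist_space SX SY T = PiM {..<T} (\<lambda>_. SX \<Otimes>\<^sub>M SY)"

text \<open>A behavioral strategy (Markov kernel from the disjoint union of all H^T to the
  action space A), given as a family of kernels indexed by the history length T.\<close>
definition behavioral_strategy ::
  "'x measure \<Rightarrow> 'y measure \<Rightarrow> 'a measure \<Rightarrow> (nat \<Rightarrow> (nat \<Rightarrow> 'x \<times> 'y) \<Rightarrow> 'a measure) \<Rightarrow> bool" where
  "behavioral_strategy SX SY A \<sigma> \<longleftrightarrow> (\<forall>T. \<sigma> T \<in> hist_space SX SY T \<rightarrow>\<^sub>M prob_algebra A)"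

definition memory_one :: "'x measure \<Rightarrow> ('x \<times> 'y \<Rightarrow> 'x measure) \<Rightarrow> nat \<Rightarrow> (nat \<Rightarrow> 'x \<times> 'y) \<Rightarrow> 'x measure" where
  "memory_one \<sigma>0 K T h = (if T = 0 then \<sigma>0 else K (h (T - 1)))"

definition two_point :: "'a measure \<Rightarrow> real \<Rightarrow> 'a \<Rightarrow> 'a \<Rightarrow> 'a measure" where
  "two_point S p a b = measure_of (space S) (sets S)
     (\<lambda>A. ennreal (p * indicator A a + (1 - p) * indicator A b))"

text \<open>hist_dist t is the distribution of the history of length t; hist_dist (Suc t) = mu_t.\<close>
primrec hist_dist ::
  "'x measure \<Rightarrow> 'y measure \<Rightarrow> (nat \<Rightarrow> (nat \<Rightarrow> 'x \<times> 'y) \<Rightarrow> 'x measure)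
   \<Rightarrow> (nat \<Rightarrow> (nat \<Rightarrow> 'x \<times> 'y) \<Rightarrow> 'y measure) \<Rightarrow> nat \<Rightarrow> (nat \<Rightarrow> 'x \<times> 'y) measure" where
  "hist_dist SX SY \<sigma>X \<sigma>Y 0 = return (hist_space SX SY 0) (\<lambda>_. undefined)"
| "hist_dist SX SY \<sigma>X \<sigma>Y (Suc t) =
     bind (hist_dist SX SY \<sigma>X \<sigma>Y t)
       (\<lambda>h. distr (\<sigma>X t h \<Otimes>\<^sub>M \<sigma>Y t h) (hist_space SX SY (Suc t)) (\<lambda>a. h(t := a)))"

definition round_dist ::
  "'x measure \<Rightarrow> 'y measure \<Rightarrow> (nat \<Rightarrow> (nat \<Rightarrow> 'x \<times> 'y) \<Rightarrow> 'x measure)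
   \<Rightarrow> (nat \<Rightarrow> (nat \<Rightarrow> 'x \<times> 'y) \<Rightarrow> 'y measure) \<Rightarrow> nat \<Rightarrow> ('x \<times> 'y) measure" where
  "round_dist SX SY \<sigma>X \<sigma>Y t = distr (hist_dist SX SY \<sigma>X \<sigma>Y (Suc t)) (SX \<Otimes>\<^sub>M SY) (\<lambda>h. h t)"

definition expected_payoff ::
  "'x measure \<Rightarrow> 'y measure \<Rightarrow> (nat \<Rightarrow> (nat \<Rightarrow> 'x \<times> 'y) \<Rightarrow> 'x measure)
   \<Rightarrow> (nat \<Rightarrow> (nat \<Rightarrow> 'x \<times> 'y) \<Rightarrow> 'y measure) \<Rightarrow> real \<Rightarrow> ('x \<Rightarrow> 'y \<Rightarrow> real) \<Rightarrow> real" where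
  "expected_payoff SX SY \<sigma>X \<sigma>Y lam u =
     (1 - lam) * (\<Sum>t. lam ^ t * (\<integral>z. case_prod u z \<partial>(round_dist SX SY \<sigma>X \<sigma>Y t)))"

definition bounded_measurable_payoff :: "'x measure \<Rightarrow> 'y measure \<Rightarrow> ('x \<Rightarrow> 'y \<Rightarrow> real) \<Rightarrow> bool" where
  "bounded_measurable_payoff SX SY u \<longleftrightarrow>
     case_prod u \<in> borel_measurable (SX \<Otimes>\<^sub>M SY) \<and>
     (\<exists>B. \<forall>x\<in>space SX. \<forall>y\<in>space SY. \<bar>u x y\<bar> \<le> B)"

end

theory Submission
  imports Defs
begin

text \<open>Let \<open>q\<^sub>t\<close> be the probability that \<open>X\<close> plays \<open>s\<^sub>1\<close> in round \<open>t\<close>. By induction \<open>X\<close> only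
  ever plays \<open>s\<^sub>1\<close> or \<open>s\<^sub>2\<close>, and there \<open>\<lambda> p(x, y) = \<phi> f(x, y) - (1 - \<lambda>) p\<^sub>0 + [x = s\<^sub>1]\<close>.
  Averaging the transition over the action pair of round \<open>t\<close> therefore gives
  \<open>\<phi> E\<^sub>\<nu>\<^sub>t[f] = \<lambda> q\<^sub>t\<^sub>+\<^sub>1 - q\<^sub>t + (1 - \<lambda>) p\<^sub>0\<close>. Multiplying by \<open>\<lambda>\<^sup>t\<close> and summing, the right-hand
  side telescopes to \<open>p\<^sub>0 - q\<^sub>0 = 0\<close>, while the left-hand side is \<open>\<phi> / (1 - \<lambda>)\<close> times
  \<open>\<alpha> \<pi>\<^sub>X + \<beta> \<pi>\<^sub>Y + \<gamma>\<close>.\<close>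

section \<open>Two-point measures\<close>

lemma sets_two_point [simp]: "sets (two_point S p a b) = sets S"
  unfolding two_point_def by (simp add: sets.space_closed sets.sigma_sets_eq)

lemma space_two_point [simp]: "space (two_point S p a b) = space S"
  by (rule sets_eq_imp_space_eq) simp

lemma emeasure_two_point:
  assumes p: "0 \<le> p" "p \<le> 1" and A: "A \<in> sets S"
  shows "emeasure (two_point S p a b) A = ennreal (p * indicator A a + (1 - p) * indicator A b)"
proof -
  have split: "ennreal (p * indicator A a + (1 - p) * indicator A b)
      = ennreal p * indicator A a + ennreal (1 - p) * indicator A b" for A
    using p by (auto simp: indicator_def)
  have "countably_additive (sets S) (\<lambda>A. ennreal (p * indicator A a + (1 - p) * indicator A b))"
  proof (rule countably_additiveI)
    fix F :: "nat \<Rightarrow> _" assume "range F \<subseteq> sets S" "disjoint_family F" "\<Union> (range F) \<in> sets S"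
    then show "(\<Sum>i. ennreal (p * indicator (F i) a + (1 - p) * indicator (F i) b))
        = ennreal (p * indicator (\<Union> (range F)) a + (1 - p) * indicator (\<Union> (range F)) b)"
      unfolding split by (simp add: suminf_add[symmetric] ennreal_suminf_cmult suminf_indicator)
  qed
  then show ?thesis unfolding two_point_def
    by (intro emeasure_measure_of_sigma[OF sets.sigma_algebra_axioms _ _ A]) (simp add: positive_def)
qed

lemma measure_two_point:
  assumes "0 \<le> p" "p \<le> 1" "A \<in> sets S"
  shows "measure (two_point S p a b) A = p * indicator A a + (1 - p) * indicator A b"
proof -
  have "0 \<le> p * indicator A a + (1 - p) * indicator A b" using assms(1,2) by simp
  then show ?thesis unfolding measure_def emeasure_two_point[OF assms] by simp
qed

lemma emeasure_two_point_eq_1: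
  assumes "0 \<le> p" "p \<le> 1" "A \<in> sets S" "a \<in> A" "b \<in> A"
  shows "emeasure (two_point S p a b) A = 1"
proof -
  have "indicator A a = (1::real)" "indicator A b = (1::real)" using assms(4,5) by auto
  then show ?thesis using emeasure_two_point[OF assms(1-3)] by simp
qed

lemma two_point_in_prob_algebra:
  assumes "0 \<le> p" "p \<le> 1" "a \<in> space S" "b \<in> space S"
  shows "two_point S p a b \<in> space (prob_algebra S)"
  using emeasure_two_point_eq_1[OF assms(1,2) sets.top assms(3,4)]
  by (auto simp: space_prob_algebra intro!: prob_spaceI)

section \<open>Sets of outer measure one\<close>

text \<open>The set of actions a player actually uses need not be measurable (the points
  \<open>s\<^sub>1, s\<^sub>2\<close> of \<open>S\<^sub>X\<close> need not be), so ``almost surely in \<open>C\<close>'' is expressed through the outer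
  measure: every measurable superset of \<open>C\<close> has full measure.\<close>
definition outer_measure_one :: "'a measure \<Rightarrow> 'a set \<Rightarrow> bool" where
  "outer_measure_one M C \<longleftrightarrow> (\<forall>G\<in>sets M. C \<inter> space M \<subseteq> G \<longrightarrow> emeasure M G = 1)"

lemma outer_measure_oneD:
  "outer_measure_one M C \<Longrightarrow> G \<in> sets M \<Longrightarrow> C \<inter> space M \<subseteq> G \<Longrightarrow> emeasure M G = 1"
  unfolding outer_measure_one_def by simp

lemma outer_measure_one_UNIV:
  assumes "prob_space M" shows "outer_measure_one M UNIV"
  unfolding outer_measure_one_def
proof (intro ballI impI)
  fix G assume G: "G \<in> sets M" "UNIV \<inter> space M \<subseteq> G"
  then have "G = space M" using sets.sets_into_space[OF G(1)] by auto
  then show "emeasure M G = 1" using prob_space.emeasure_space_1[OF assms] by simp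
qed

lemma outer_measure_one_two_point:
  assumes "0 \<le> p" "p \<le> 1" "a \<in> space S" "b \<in> space S"
  shows "outer_measure_one (two_point S p a b) {a, b}"
  unfolding outer_measure_one_def
proof (intro ballI impI)
  fix G assume G: "G \<in> sets (two_point S p a b)" "{a, b} \<inter> space (two_point S p a b) \<subseteq> G"
  have "a \<in> G" "b \<in> G" using G(2) assms(3,4) by auto
  then show "emeasure (two_point S p a b) G = 1"
    using G(1) assms(1,2) by (intro emeasure_two_point_eq_1) simp_all
qed

lemma AE_outer_measure_one:
  assumes "prob_space M" "outer_measure_one M C" "{x \<in> space M. P x} \<in> sets M"
    and "\<And>x. x \<in> C \<Longrightarrow> x \<in> space M \<Longrightarrow> P x"
  shows "AE x in M. P x"
proof -
  have "emeasure M {x \<in> space M. P x} = 1"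
    using assms(4) by (intro outer_measure_oneD[OF assms(2,3)]) auto
  then have "AE x in M. x \<in> {x \<in> space M. P x}"
    using assms(1) by (intro prob_space.AE_prob_1) (simp_all add: measure_def)
  then show ?thesis by simp
qed

lemma outer_measure_one_distr:
  assumes f: "f \<in> M \<rightarrow>\<^sub>M N" and C: "outer_measure_one M C"
    and image: "f ` (C \<inter> space M) \<subseteq> D"
  shows "outer_measure_one (distr M N f) D"
  unfolding outer_measure_one_def
proof (intro ballI impI)
  fix G assume G: "G \<in> sets (distr M N f)" "D \<inter> space (distr M N f) \<subseteq> G"
  have "C \<inter> space M \<subseteq> f -` G \<inter> space M"
    using G(2) image measurable_space[OF f] by auto
  then show "emeasure (distr M N f) G = 1"
    using G(1) measurable_sets[OF f] by (simp add: emeasure_distr[OF f] outer_measure_oneD[OF C])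
qed

lemma outer_measure_one_nn_integral:
  assumes M: "prob_space M" "outer_measure_one M C"
    and g: "g \<in> borel_measurable M" and C: "\<And>x. x \<in> C \<Longrightarrow> x \<in> space M \<Longrightarrow> g x = 1"
  shows "(\<integral>\<^sup>+x. g x \<partial>M) = 1"
proof -
  have "AE x in M. g x = 1"
    using g C by (intro AE_outer_measure_one[OF M]) auto
  then have "(\<integral>\<^sup>+x. g x \<partial>M) = (\<integral>\<^sup>+x. 1 \<partial>M)" by (rule nn_integral_cong_AE)
  then show ?thesis using prob_space.emeasure_space_1[OF M(1)] by simp
qed

lemma outer_measure_one_pair:
  assumes M: "prob_space M" "outer_measure_one M C" and N: "prob_space N"
  shows "outer_measure_one (M \<Otimes>\<^sub>M N) {z. fst z \<in> C}"
  unfolding outer_measure_one_def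
proof (intro ballI impI)
  interpret N: prob_space N by (fact N)
  fix G assume G: "G \<in> sets (M \<Otimes>\<^sub>M N)" "{z. fst z \<in> C} \<inter> space (M \<Otimes>\<^sub>M N) \<subseteq> G"
  have "Pair x -` G = space N" if "x \<in> C" "x \<in> space M" for x
  proof (intro set_eqI iffI)
    fix y assume "y \<in> Pair x -` G"
    then show "y \<in> space N" using sets.sets_into_space[OF G(1)] by (auto simp: space_pair_measure)
  next
    fix y assume "y \<in> space N"
    then have "(x, y) \<in> {z. fst z \<in> C} \<inter> space (M \<Otimes>\<^sub>M N)"
      using that by (simp add: space_pair_measure)
    then show "y \<in> Pair x -` G" using G(2) by auto
  qed
  then have "(\<integral>\<^sup>+x. emeasure N (Pair x -` G) \<partial>M) = 1"
    by (intro outer_measure_one_nn_integral[OF M] N.measurable_emeasure_Pair[OF G(1)])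
       (simp add: N.emeasure_space_1)
  then show "emeasure (M \<Otimes>\<^sub>M N) G = 1"
    unfolding N.emeasure_pair_measure_alt[OF G(1)] .
qed

lemma outer_measure_one_bind:
  assumes M: "M \<in> space (prob_algebra L)" "outer_measure_one M C"
    and N: "N \<in> L \<rightarrow>\<^sub>M prob_algebra R"
    and ND: "\<And>x. x \<in> C \<Longrightarrow> x \<in> space L \<Longrightarrow> outer_measure_one (N x) D"
  shows "outer_measure_one (bind M N) D"
  unfolding outer_measure_one_def
proof (intro ballI impI)
  fix G assume G: "G \<in> sets (bind M N)" "D \<inter> space (bind M N) \<subseteq> G"
  have M_L: "prob_space M" "sets M = sets L"
    using M(1) by (auto simp: space_prob_algebra)
  have "space M = space L" using M_L(2) by (rule sets_eq_imp_space_eq)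
  have GR: "G \<in> sets R" using G(1) sets_bind'[OF M(1) N] by simp
  have "emeasure (N x) G = 1" if "x \<in> C" "x \<in> space L" for x
  proof -
    have Nx: "N x \<in> space (prob_algebra R)" using measurable_space[OF N that(2)] .
    then have "sets (N x) = sets (bind M N)"
      using sets_bind'[OF M(1) N] by (simp add: space_prob_algebra)
    then have "space (N x) = space (bind M N)" by (rule sets_eq_imp_space_eq)
    with G(2) show ?thesis
      using Nx GR by (intro outer_measure_oneD[OF ND[OF that]]) (auto simp: space_prob_algebra)
  qed
  moreover have "(\<lambda>x. emeasure (N x) G) \<in> borel_measurable M"
    using measurable_compose[OF measurable_prob_algebraD[OF N] measurable_emeasure_subprob_algebra[OF GR]]
    by (simp add: measurable_cong_sets[OF M_L(2) refl])
  ultimately have "(\<integral>\<^sup>+x. emeasure (N x) G \<partial>M) = 1"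
    using \<open>space M = space L\<close> by (intro outer_measure_one_nn_integral[OF M_L(1) M(2)]) auto
  then show "emeasure (bind M N) G = 1"
    unfolding emeasure_bind_prob_algebra[OF M(1) N GR] .
qed

section \<open>The history process\<close>

lemma measure_pair_measure_Times_space:
  assumes "prob_space N" "A \<in> sets M"
  shows "measure (M \<Otimes>\<^sub>M N) (A \<times> space N) = measure M A"
proof -
  interpret N: prob_space N by fact
  show ?thesis
    using N.emeasure_pair_measure_Times[OF assms(2) sets.top] by (simp add: measure_def N.emeasure_space_1)
qed

lemma measure_bind_prob_algebra:
  assumes M: "M \<in> space (prob_algebra L)" and N: "N \<in> L \<rightarrow>\<^sub>M prob_algebra R" and E: "E \<in> sets R"
  shows "measure (bind M N) E = (\<integral>x. measure (N x) E \<partial>M)"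
proof -
  interpret prob_space M using M by (simp add: space_prob_algebra)
  have sets_M: "sets M = sets L" using M by (simp add: space_prob_algebra)
  then have space_M: "space M = space L" by (rule sets_eq_imp_space_eq)
  have Nx: "prob_space (N x)" "sets (N x) = sets R" if "x \<in> space M" for x
    using measurable_space[OF N, of x] that space_M by (auto simp: space_prob_algebra)
  have meas: "(\<lambda>x. measure (N x) E) \<in> borel_measurable M"
    using measurable_compose[OF N measurable_measure_prob_algebra[OF E]]
    by (simp add: measurable_cong_sets[OF sets_M refl])
  have "emeasure (bind M N) E = (\<integral>\<^sup>+x. ennreal (measure (N x) E) \<partial>M)"
    unfolding emeasure_bind_prob_algebra[OF M N E]
    by (intro nn_integral_cong) (simp add: finite_measure.emeasure_eq_measure prob_space.finite_measure Nx)
  also have "\<dots> = ennreal (\<integral>x. measure (N x) E \<partial>M)"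
    by (intro nn_integral_eq_integral integrable_const_bound[where B=1] meas AE_I2)
       (simp_all add: prob_space.prob_le_1 Nx)
  finally show ?thesis by (simp add: measure_def)
qed

lemma measurable_hist_component:
  "t < T \<Longrightarrow> (\<lambda>h. h t) \<in> hist_space SX SY T \<rightarrow>\<^sub>M SX \<Otimes>\<^sub>M SY"
  unfolding hist_space_def by (rule measurable_component_singleton) simp

lemma measurable_hist_append:
  "(\<lambda>(h, a). h(t := a)) \<in> hist_space SX SY t \<Otimes>\<^sub>M (SX \<Otimes>\<^sub>M SY) \<rightarrow>\<^sub>M hist_space SX SY (Suc t)"
  unfolding hist_space_def lessThan_Suc by (rule measurable_add_dim)

lemma measurable_hist_append_at:
  "h \<in> space (hist_space SX SY t) \<Longrightarrow> (\<lambda>a. h(t := a)) \<in> SX \<Otimes>\<^sub>M SY \<rightarrow>\<^sub>M hist_space SX SY (Suc t)"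
  unfolding hist_space_def lessThan_Suc by (rule measurable_component_update) simp_all

lemma behavioral_strategy_in_prob_algebra:
  assumes "behavioral_strategy SX SY A \<sigma>" "h \<in> space (hist_space SX SY t)"
  shows "\<sigma> t h \<in> space (prob_algebra A)"
  by (rule measurable_space[OF assms(1)[unfolded behavioral_strategy_def, rule_format] assms(2)])

context
  fixes SX :: "'x measure" and SY :: "'y measure"
    and \<sigma>X :: "nat \<Rightarrow> (nat \<Rightarrow> 'x \<times> 'y) \<Rightarrow> 'x measure"
    and \<sigma>Y :: "nat \<Rightarrow> (nat \<Rightarrow> 'x \<times> 'y) \<Rightarrow> 'y measure"
  assumes \<sigma>X: "behavioral_strategy SX SY SX \<sigma>X" and \<sigma>Y: "behavioral_strategy SX SY SY \<sigma>Y"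
begin

lemma measurable_round_kernel:
  "(\<lambda>h. \<sigma>X t h \<Otimes>\<^sub>M \<sigma>Y t h) \<in> hist_space SX SY t \<rightarrow>\<^sub>M prob_algebra (SX \<Otimes>\<^sub>M SY)"
  using \<sigma>X \<sigma>Y unfolding behavioral_strategy_def by (intro measurable_pair_prob) auto

lemma measurable_hist_kernel:
  "(\<lambda>h. distr (\<sigma>X t h \<Otimes>\<^sub>M \<sigma>Y t h) (hist_space SX SY (Suc t)) (\<lambda>a. h(t := a)))
     \<in> hist_space SX SY t \<rightarrow>\<^sub>M prob_algebra (hist_space SX SY (Suc t))"
  using measurable_round_kernel measurable_hist_append by (rule measurable_distr_prob_space2)

lemma sets_round_kernel:
  assumes "h \<in> space (hist_space SX SY t)"
  shows "sets (\<sigma>X t h \<Otimes>\<^sub>M \<sigma>Y t h) = sets (SX \<Otimes>\<^sub>M SY)"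
  using behavioral_strategy_in_prob_algebra[OF \<sigma>X assms] behavioral_strategy_in_prob_algebra[OF \<sigma>Y assms]
  by (intro sets_pair_measure_cong) (auto simp: space_prob_algebra)

lemma hist_dist_in_prob_algebra:
  "hist_dist SX SY \<sigma>X \<sigma>Y t \<in> space (prob_algebra (hist_space SX SY t))"
proof (induction t)
  case 0
  have "(\<lambda>_. undefined) \<in> space (hist_space SX SY 0)"
    by (simp add: hist_space_def space_PiM)
  then show ?case by (simp add: space_prob_algebra prob_space_return)
next
  case (Suc t)
  show ?case
    using prob_space_bind'[OF Suc measurable_hist_kernel] sets_bind'[OF Suc measurable_hist_kernel]
    by (simp add: space_prob_algebra)
qed

lemma
  shows prob_space_hist_dist: "prob_space (hist_dist SX SY \<sigma>X \<sigma>Y t)"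
    and sets_hist_dist: "sets (hist_dist SX SY \<sigma>X \<sigma>Y t) = sets (hist_space SX SY t)"
  using hist_dist_in_prob_algebra[of t] by (auto simp: space_prob_algebra)

lemma space_hist_dist: "space (hist_dist SX SY \<sigma>X \<sigma>Y t) = space (hist_space SX SY t)"
  using sets_hist_dist by (rule sets_eq_imp_space_eq)

lemma round_dist_eq_bind:
  "round_dist SX SY \<sigma>X \<sigma>Y t = bind (hist_dist SX SY \<sigma>X \<sigma>Y t) (\<lambda>h. \<sigma>X t h \<Otimes>\<^sub>M \<sigma>Y t h)"
proof -
  let ?H = "hist_dist SX SY \<sigma>X \<sigma>Y t"
  have kernel: "(\<lambda>h. distr (\<sigma>X t h \<Otimes>\<^sub>M \<sigma>Y t h) (hist_space SX SY (Suc t)) (\<lambda>a. h(t := a)))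
      \<in> ?H \<rightarrow>\<^sub>M subprob_algebra (hist_space SX SY (Suc t))"
    using measurable_prob_algebraD[OF measurable_hist_kernel]
    by (simp cong: measurable_cong_sets[OF sets_hist_dist refl])
  have "space ?H \<noteq> {}" using prob_space.not_empty[OF prob_space_hist_dist] .
  then have "round_dist SX SY \<sigma>X \<sigma>Y t = bind ?H (\<lambda>h. distr (distr (\<sigma>X t h \<Otimes>\<^sub>M \<sigma>Y t h)
      (hist_space SX SY (Suc t)) (\<lambda>a. h(t := a))) (SX \<Otimes>\<^sub>M SY) (\<lambda>h'. h' t))"
    unfolding round_dist_def hist_dist.simps
    by (rule distr_bind[OF kernel _ measurable_hist_component]) simp
  also have "\<dots> = bind ?H (\<lambda>h. \<sigma>X t h \<Otimes>\<^sub>M \<sigma>Y t h)"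
  proof (rule bind_cong[OF refl])
    fix h assume "h \<in> space ?H"
    then have h: "h \<in> space (hist_space SX SY t)" by (simp add: space_hist_dist)
    have append: "(\<lambda>a. h(t := a)) \<in> \<sigma>X t h \<Otimes>\<^sub>M \<sigma>Y t h \<rightarrow>\<^sub>M hist_space SX SY (Suc t)"
      using measurable_hist_append_at[OF h] by (simp cong: measurable_cong_sets[OF sets_round_kernel[OF h] refl])
    have "distr (distr (\<sigma>X t h \<Otimes>\<^sub>M \<sigma>Y t h) (hist_space SX SY (Suc t)) (\<lambda>a. h(t := a))) (SX \<Otimes>\<^sub>M SY) (\<lambda>h'. h' t)
        = distr (\<sigma>X t h \<Otimes>\<^sub>M \<sigma>Y t h) (SX \<Otimes>\<^sub>M SY) (\<lambda>a. a)"
      using distr_distr[OF measurable_hist_component append] by (simp add: comp_def)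
    also have "\<dots> = \<sigma>X t h \<Otimes>\<^sub>M \<sigma>Y t h"
      using sets_round_kernel[OF h] by (intro distr_id2) simp
    finally show "distr (distr (\<sigma>X t h \<Otimes>\<^sub>M \<sigma>Y t h) (hist_space SX SY (Suc t)) (\<lambda>a. h(t := a)))
        (SX \<Otimes>\<^sub>M SY) (\<lambda>h'. h' t) = \<sigma>X t h \<Otimes>\<^sub>M \<sigma>Y t h" .
  qed
  finally show ?thesis .
qed

lemma round_dist_in_prob_algebra:
  "round_dist SX SY \<sigma>X \<sigma>Y t \<in> space (prob_algebra (SX \<Otimes>\<^sub>M SY))"
  using prob_space_bind'[OF hist_dist_in_prob_algebra measurable_round_kernel]
    sets_bind'[OF hist_dist_in_prob_algebra measurable_round_kernel]
  by (simp add: round_dist_eq_bind space_prob_algebra)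

lemma
  shows prob_space_round_dist: "prob_space (round_dist SX SY \<sigma>X \<sigma>Y t)"
    and sets_round_dist: "sets (round_dist SX SY \<sigma>X \<sigma>Y t) = sets (SX \<Otimes>\<^sub>M SY)"
  using round_dist_in_prob_algebra[of t] by (auto simp: space_prob_algebra)

lemma space_round_dist: "space (round_dist SX SY \<sigma>X \<sigma>Y t) = space (SX \<Otimes>\<^sub>M SY)"
  using sets_round_dist by (rule sets_eq_imp_space_eq)

lemma measure_round_dist_fst:
  assumes B: "B \<in> sets SX"
  shows "measure (round_dist SX SY \<sigma>X \<sigma>Y t) (B \<times> space SY)
    = (\<integral>h. measure (\<sigma>X t h) B \<partial>hist_dist SX SY \<sigma>X \<sigma>Y t)"
proof -
  let ?H = "hist_dist SX SY \<sigma>X \<sigma>Y t"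
  have pair: "measure (\<sigma>X t h \<Otimes>\<^sub>M \<sigma>Y t h) (B \<times> space SY) = measure (\<sigma>X t h) B"
    if h: "h \<in> space (hist_space SX SY t)" for h
  proof -
    interpret Y: prob_space "\<sigma>Y t h"
      using behavioral_strategy_in_prob_algebra[OF \<sigma>Y h] by (simp add: space_prob_algebra)
    have "sets (\<sigma>X t h) = sets SX" "sets (\<sigma>Y t h) = sets SY"
      using behavioral_strategy_in_prob_algebra[OF \<sigma>X h] behavioral_strategy_in_prob_algebra[OF \<sigma>Y h]
      by (simp_all add: space_prob_algebra)
    then show ?thesis
      using measure_pair_measure_Times_space[OF Y.prob_space_axioms, of B "\<sigma>X t h"] B
        sets_eq_imp_space_eq[of "\<sigma>Y t h" SY] by simp
  qed
  have "measure (round_dist SX SY \<sigma>X \<sigma>Y t) (B \<times> space SY)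
      = (\<integral>h. measure (\<sigma>X t h \<Otimes>\<^sub>M \<sigma>Y t h) (B \<times> space SY) \<partial>?H)"
    unfolding round_dist_eq_bind
    using B by (intro measure_bind_prob_algebra[OF hist_dist_in_prob_algebra measurable_round_kernel]) simp
  also have "\<dots> = (\<integral>h. measure (\<sigma>X t h) B \<partial>?H)"
    by (rule Bochner_Integration.integral_cong[OF refl]) (simp add: pair space_hist_dist)
  finally show ?thesis .
qed

lemma outer_measure_one_hist_dist_Suc:
  assumes C: "outer_measure_one (hist_dist SX SY \<sigma>X \<sigma>Y t) C"
    and D: "\<And>h. h \<in> C \<Longrightarrow> h \<in> space (hist_space SX SY t) \<Longrightarrow> outer_measure_one (\<sigma>X t h) D"
  shows "outer_measure_one (hist_dist SX SY \<sigma>X \<sigma>Y (Suc t)) {h. fst (h t) \<in> D}"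
proof -
  have "outer_measure_one (distr (\<sigma>X t h \<Otimes>\<^sub>M \<sigma>Y t h) (hist_space SX SY (Suc t)) (\<lambda>a. h(t := a)))
      {h'. fst (h' t) \<in> D}"
    if h: "h \<in> C" "h \<in> space (hist_space SX SY t)" for h
  proof (rule outer_measure_one_distr)
    show "(\<lambda>a. h(t := a)) \<in> \<sigma>X t h \<Otimes>\<^sub>M \<sigma>Y t h \<rightarrow>\<^sub>M hist_space SX SY (Suc t)"
      using measurable_hist_append_at[OF h(2)]
      by (simp cong: measurable_cong_sets[OF sets_round_kernel[OF h(2)] refl])
    show "outer_measure_one (\<sigma>X t h \<Otimes>\<^sub>M \<sigma>Y t h) {z. fst z \<in> D}"
      using behavioral_strategy_in_prob_algebra[OF \<sigma>X h(2)] behavioral_strategy_in_prob_algebra[OF \<sigma>Y h(2)]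
      by (intro outer_measure_one_pair D[OF h]) (simp_all add: space_prob_algebra)
  qed auto
  then show ?thesis
    unfolding hist_dist.simps
    by (rule outer_measure_one_bind[OF hist_dist_in_prob_algebra C measurable_hist_kernel])
qed

lemma outer_measure_one_round_dist:
  assumes "outer_measure_one (hist_dist SX SY \<sigma>X \<sigma>Y (Suc t)) {h. fst (h t) \<in> D}"
  shows "outer_measure_one (round_dist SX SY \<sigma>X \<sigma>Y t) {z. fst z \<in> D}"
  unfolding round_dist_def
proof (rule outer_measure_one_distr[OF _ assms])
  show "(\<lambda>h. h t) \<in> hist_dist SX SY \<sigma>X \<sigma>Y (Suc t) \<rightarrow>\<^sub>M SX \<Otimes>\<^sub>M SY"
    using measurable_hist_component[of t "Suc t" SX SY]
    by (simp cong: measurable_cong_sets[OF sets_hist_dist refl])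
qed auto

end

section \<open>Memory-one strategies\<close>

lemma behavioral_strategy_memory_one:
  assumes "\<sigma>0 \<in> space (prob_algebra A)" "K \<in> SX \<Otimes>\<^sub>M SY \<rightarrow>\<^sub>M prob_algebra A"
  shows "behavioral_strategy SX SY A (memory_one \<sigma>0 K)"
  unfolding behavioral_strategy_def
proof
  fix T show "memory_one \<sigma>0 K T \<in> hist_space SX SY T \<rightarrow>\<^sub>M prob_algebra A"
  proof (cases T)
    case 0
    then have "memory_one \<sigma>0 K T = (\<lambda>h. \<sigma>0)" by (simp add: memory_one_def fun_eq_iff)
    then show ?thesis using assms(1) by simp
  next
    case (Suc t)
    then have "memory_one \<sigma>0 K T = (\<lambda>h. K (h t))" by (simp add: memory_one_def fun_eq_iff)
    then show ?thesis
      using measurable_compose[OF measurable_hist_component[of t T SX SY] assms(2)] Suc by simp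
  qed
qed

context
  fixes SX :: "'x measure" and SY :: "'y measure"
    and \<sigma>0 :: "'x measure" and K :: "'x \<times> 'y \<Rightarrow> 'x measure"
    and \<sigma>Y :: "nat \<Rightarrow> (nat \<Rightarrow> 'x \<times> 'y) \<Rightarrow> 'y measure"
  assumes \<sigma>0: "\<sigma>0 \<in> space (prob_algebra SX)" and K: "K \<in> SX \<Otimes>\<^sub>M SY \<rightarrow>\<^sub>M prob_algebra SX"
    and \<sigma>Y: "behavioral_strategy SX SY SY \<sigma>Y"
begin

lemmas memory_one_strategy = behavioral_strategy_memory_one[OF \<sigma>0 K]

lemma outer_measure_one_round_dist_memory_one:
  assumes \<sigma>0_D: "outer_measure_one \<sigma>0 D"
    and K_D: "\<And>x y. x \<in> D \<Longrightarrow> x \<in> space SX \<Longrightarrow> y \<in> space SY \<Longrightarrow> outer_measure_one (K (x, y)) D"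
  shows "outer_measure_one (round_dist SX SY (memory_one \<sigma>0 K) \<sigma>Y t) {z. fst z \<in> D}"
proof -
  have "outer_measure_one (hist_dist SX SY (memory_one \<sigma>0 K) \<sigma>Y (Suc t)) {h. fst (h t) \<in> D}"
  proof (induction t)
    case 0
    show ?case
      using outer_measure_one_UNIV[OF prob_space_hist_dist[OF memory_one_strategy \<sigma>Y]]
      by (rule outer_measure_one_hist_dist_Suc[OF memory_one_strategy \<sigma>Y]) (simp add: memory_one_def \<sigma>0_D)
  next
    case (Suc t)
    show ?case
    proof (rule outer_measure_one_hist_dist_Suc[OF memory_one_strategy \<sigma>Y Suc])
      fix h assume h: "h \<in> {h. fst (h t) \<in> D}" "h \<in> space (hist_space SX SY (Suc t))"
      then have "h t \<in> space (SX \<Otimes>\<^sub>M SY)"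
        using measurable_space[OF measurable_hist_component[of t "Suc t" SX SY]] by simp
      then have "fst (h t) \<in> space SX" "snd (h t) \<in> space SY"
        by (auto simp: space_pair_measure mem_Times_iff)
      then show "outer_measure_one (memory_one \<sigma>0 K (Suc t) h) D"
        using h(1) K_D[of "fst (h t)" "snd (h t)"] by (simp add: memory_one_def)
    qed
  qed
  then show ?thesis by (rule outer_measure_one_round_dist[OF memory_one_strategy \<sigma>Y])
qed

lemma measure_round_dist_memory_one_0:
  assumes "B \<in> sets SX"
  shows "measure (round_dist SX SY (memory_one \<sigma>0 K) \<sigma>Y 0) (B \<times> space SY) = measure \<sigma>0 B"
  using prob_space.prob_space[OF prob_space_hist_dist[OF memory_one_strategy \<sigma>Y, of 0]]
  by (simp add: measure_round_dist_fst[OF memory_one_strategy \<sigma>Y assms] memory_one_def del: hist_dist.simps)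

lemma measure_round_dist_memory_one_Suc:
  assumes B: "B \<in> sets SX"
  shows "measure (round_dist SX SY (memory_one \<sigma>0 K) \<sigma>Y (Suc t)) (B \<times> space SY)
    = (\<integral>z. measure (K z) B \<partial>round_dist SX SY (memory_one \<sigma>0 K) \<sigma>Y t)"
proof -
  let ?H = "hist_dist SX SY (memory_one \<sigma>0 K) \<sigma>Y (Suc t)"
  have "(\<lambda>h. h t) \<in> ?H \<rightarrow>\<^sub>M SX \<Otimes>\<^sub>M SY"
    using measurable_hist_component[of t "Suc t" SX SY]
    by (simp cong: measurable_cong_sets[OF sets_hist_dist[OF memory_one_strategy \<sigma>Y] refl])
  moreover have "(\<lambda>z. measure (K z) B) \<in> borel_measurable (SX \<Otimes>\<^sub>M SY)"
    using measurable_compose[OF K measurable_measure_prob_algebra[OF B]] .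
  ultimately have "(\<integral>h. measure (K (h t)) B \<partial>?H)
      = (\<integral>z. measure (K z) B \<partial>round_dist SX SY (memory_one \<sigma>0 K) \<sigma>Y t)"
    unfolding round_dist_def by (rule integral_distr[symmetric])
  then show ?thesis
    by (simp add: measure_round_dist_fst[OF memory_one_strategy \<sigma>Y B] memory_one_def del: hist_dist.simps)
qed

end

section \<open>Discounted sums\<close>

lemma summable_discounted:
  fixes a :: "nat \<Rightarrow> real"
  assumes "0 \<le> lam" "lam < 1" "\<And>t. \<bar>a t\<bar> \<le> B"
  shows "summable (\<lambda>t. lam ^ t * a t)"
proof (rule summable_comparison_test[of _ "\<lambda>t. B * lam ^ t"])
  show "\<exists>N. \<forall>t\<ge>N. norm (lam ^ t * a t) \<le> B * lam ^ t"
    using assms by (auto simp: abs_mult mult.commute intro!: mult_right_mono)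
  show "summable (\<lambda>t. B * lam ^ t)" using assms by (intro summable_mult summable_geometric) auto
qed

lemma discounted_average_affine:
  fixes a b :: "nat \<Rightarrow> real"
  assumes lam: "0 \<le> lam" "lam < 1" and a: "\<And>t. \<bar>a t\<bar> \<le> A" and b: "\<And>t. \<bar>b t\<bar> \<le> B"
  shows "\<alpha> * ((1 - lam) * (\<Sum>t. lam ^ t * a t)) + \<beta> * ((1 - lam) * (\<Sum>t. lam ^ t * b t)) + \<gamma>
    = (1 - lam) * (\<Sum>t. lam ^ t * (\<alpha> * a t + \<beta> * b t + \<gamma>))"
proof -
  have sa: "(\<lambda>t. \<alpha> * (lam ^ t * a t)) sums (\<alpha> * (\<Sum>t. lam ^ t * a t))"
    using summable_discounted[OF lam a] by (intro sums_mult summable_sums)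
  have sb: "(\<lambda>t. \<beta> * (lam ^ t * b t)) sums (\<beta> * (\<Sum>t. lam ^ t * b t))"
    using summable_discounted[OF lam b] by (intro sums_mult summable_sums)
  have sg: "(\<lambda>t. \<gamma> * lam ^ t) sums (\<gamma> * (1 / (1 - lam)))"
    using lam by (intro sums_mult geometric_sums) simp
  have "(\<lambda>t. lam ^ t * (\<alpha> * a t + \<beta> * b t + \<gamma>))
      sums (\<alpha> * (\<Sum>t. lam ^ t * a t) + \<beta> * (\<Sum>t. lam ^ t * b t) + \<gamma> / (1 - lam))"
    using sums_add[OF sums_add[OF sa sb] sg] by (simp add: algebra_simps)
  then show ?thesis using lam by (simp add: sums_iff field_simps)
qed

lemma suminf_discounted_telescope:
  fixes q :: "nat \<Rightarrow> real"
  assumes lam: "0 \<le> lam" "lam < 1" and q: "\<And>t. \<bar>q t\<bar> \<le> B"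
  shows "(\<Sum>t. lam ^ t * (lam * q (Suc t) - q t + (1 - lam) * c)) = c - q 0"
proof -
  have "(\<lambda>t. lam ^ t) \<longlonglongrightarrow> 0" using lam by (intro LIMSEQ_power_zero) simp
  moreover have "\<forall>\<^sub>F t in sequentially. norm (lam ^ t * q t) \<le> norm (lam ^ t) * B"
    using lam q by (intro always_eventually allI) (simp add: abs_mult mult_left_mono)
  ultimately have "(\<lambda>t. lam ^ t * q t) \<longlonglongrightarrow> 0" by (rule tendsto_0_le)
  from telescope_sums[OF this]
  have "(\<lambda>t. lam ^ t * (lam * q (Suc t) - q t)) sums (- q 0)"
    by (simp add: algebra_simps)
  moreover have "(\<lambda>t. (1 - lam) * c * lam ^ t) sums ((1 - lam) * c * (1 / (1 - lam)))"
    using lam by (intro sums_mult geometric_sums) simp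
  then have "(\<lambda>t. (1 - lam) * c * lam ^ t) sums c" using lam by simp
  ultimately have "(\<lambda>t. lam ^ t * (lam * q (Suc t) - q t) + (1 - lam) * c * lam ^ t) sums (- q 0 + c)"
    by (rule sums_add)
  then have "(\<lambda>t. lam ^ t * (lam * q (Suc t) - q t + (1 - lam) * c)) sums (c - q 0)"
    by (simp add: algebra_simps)
  then show ?thesis by (rule sums_unique[symmetric])
qed

section \<open>Two-action strategies enforcing a linear payoff relation\<close>

lemma integral_bounded_prob:
  fixes g :: "'a \<Rightarrow> real"
  assumes "prob_space M" "g \<in> borel_measurable M" "\<And>x. x \<in> space M \<Longrightarrow> \<bar>g x\<bar> \<le> B"
  shows "integrable M g" "\<bar>\<integral>x. g x \<partial>M\<bar> \<le> B"
proof -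
  interpret prob_space M by fact
  show int: "integrable M g"
    using assms(2,3) by (intro integrable_const_bound[where B=B] AE_I2) auto
  have "- B \<le> g x" "g x \<le> B" if "x \<in> space M" for x
    using assms(3)[OF that] by linarith+
  then have "- B \<le> (\<integral>x. g x \<partial>M)" "(\<integral>x. g x \<partial>M) \<le> B"
    by (auto intro!: integral_ge_const integral_le_const int AE_I2)
  then show "\<bar>\<integral>x. g x \<partial>M\<bar> \<le> B" by simp
qed

lemma bounded_measurable_payoff_integral:
  assumes "bounded_measurable_payoff SX SY u"
  obtains B where "\<And>M. prob_space M \<Longrightarrow> sets M = sets (SX \<Otimes>\<^sub>M SY) \<Longrightarrow>
    integrable M (case_prod u) \<and> \<bar>\<integral>z. case_prod u z \<partial>M\<bar> \<le> B"
proof -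
  obtain B where B: "\<forall>x\<in>space SX. \<forall>y\<in>space SY. \<bar>u x y\<bar> \<le> B"
    and meas: "case_prod u \<in> borel_measurable (SX \<Otimes>\<^sub>M SY)"
    using assms unfolding bounded_measurable_payoff_def by blast
  have "integrable M (case_prod u) \<and> \<bar>\<integral>z. case_prod u z \<partial>M\<bar> \<le> B"
    if "prob_space M" "sets M = sets (SX \<Otimes>\<^sub>M SY)" for M
  proof -
    have "space M = space (SX \<Otimes>\<^sub>M SY)" using that(2) by (rule sets_eq_imp_space_eq)
    then have "\<bar>case_prod u z\<bar> \<le> B" if "z \<in> space M" for z
      using B that by (auto simp: space_pair_measure)
    then show ?thesis
      using integral_bounded_prob[OF \<open>prob_space M\<close>, of "case_prod u" B] meas
      by (simp add: measurable_cong_sets[OF that(2) refl])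
  qed
  then show ?thesis by (rule that)
qed

locale two_action_zd_strategy =
  fixes SX :: "'x measure" and SY :: "'y measure"
    and uX uY :: "'x \<Rightarrow> 'y \<Rightarrow> real"
    and lam \<alpha> \<beta> \<gamma> p0 \<phi> :: real and s1 s2 :: 'x
    and K :: "'x \<times> 'y \<Rightarrow> 'x measure"
    and \<sigma>Y :: "nat \<Rightarrow> (nat \<Rightarrow> 'x \<times> 'y) \<Rightarrow> 'y measure"
    and f :: "'x \<Rightarrow> 'y \<Rightarrow> real"
  assumes f_def: "f = (\<lambda>s y. \<alpha> * uX s y + \<beta> * uY s y + \<gamma>)"
    and uX: "bounded_measurable_payoff SX SY uX"
    and uY: "bounded_measurable_payoff SX SY uY"
    and lam: "0 < lam" "lam < 1"
    and s: "s1 \<in> space SX" "s2 \<in> space SX"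
    and p0: "0 \<le> p0" "p0 \<le> 1"
    and phi: "\<phi> > 0"
    and f1: "\<forall>y\<in>space SY. - (1 - (1 - lam) * p0) / \<phi> \<le> f s1 y \<and> f s1 y \<le> - ((1 - lam) * (1 - p0)) / \<phi>"
    and f2: "\<forall>y\<in>space SY. (1 - lam) * p0 / \<phi> \<le> f s2 y \<and> f s2 y \<le> (lam + (1 - lam) * p0) / \<phi>"
    and K_kernel: "K \<in> SX \<Otimes>\<^sub>M SY \<rightarrow>\<^sub>M prob_algebra SX"
    and K1: "\<forall>y\<in>space SY. K (s1, y) = two_point SX ((\<phi> * f s1 y - (1 - lam) * p0 + 1) / lam) s1 s2"
    and K2: "\<forall>y\<in>space SY. K (s2, y) = two_point SX ((\<phi> * f s2 y - (1 - lam) * p0) / lam) s1 s2"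
    and \<sigma>Y: "behavioral_strategy SX SY SY \<sigma>Y"
begin

abbreviation \<sigma>X :: "nat \<Rightarrow> (nat \<Rightarrow> 'x \<times> 'y) \<Rightarrow> 'x measure" where
  "\<sigma>X \<equiv> memory_one (two_point SX p0 s1 s2) K"

abbreviation \<nu> :: "nat \<Rightarrow> ('x \<times> 'y) measure" where
  "\<nu> \<equiv> round_dist SX SY \<sigma>X \<sigma>Y"

lemma initial_in_prob_algebra: "two_point SX p0 s1 s2 \<in> space (prob_algebra SX)"
  using p0 s by (rule two_point_in_prob_algebra)

lemma behavioral_strategy_X: "behavioral_strategy SX SY SX \<sigma>X"
  using initial_in_prob_algebra K_kernel by (rule behavioral_strategy_memory_one)

lemma measurable_f [measurable]: "(\<lambda>z. f (fst z) (snd z)) \<in> borel_measurable (SX \<Otimes>\<^sub>M SY)"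
proof -
  have "case_prod uX \<in> borel_measurable (SX \<Otimes>\<^sub>M SY)" "case_prod uY \<in> borel_measurable (SX \<Otimes>\<^sub>M SY)"
    using uX uY by (simp_all add: bounded_measurable_payoff_def)
  then show ?thesis unfolding f_def case_prod_beta' by measurable
qed

lemma f_s1_less_f_s2: "y \<in> space SY \<Longrightarrow> f s1 y < f s2 y"
proof -
  assume y: "y \<in> space SY"
  have "f s1 y \<le> - ((1 - lam) * (1 - p0)) / \<phi>" using f1 y by blast
  moreover have "(1 - lam) * p0 / \<phi> \<le> f s2 y" using f2 y by blast
  moreover have "- ((1 - lam) * (1 - p0)) / \<phi> < (1 - lam) * p0 / \<phi>"
    using lam phi by (simp add: divide_strict_right_mono field_simps)
  ultimately show ?thesis by linarith
qed

text \<open>Points of \<open>S\<^sub>X\<close> need not be measurable, but a sublevel set of \<open>f(\<cdot>, y)\<close> separates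
  \<open>s\<^sub>1\<close> from \<open>s\<^sub>2\<close>.\<close>
lemma exists_separating_set: "\<exists>A\<in>sets SX. s1 \<in> A \<and> s2 \<notin> A"
proof -
  have "prob_space (\<sigma>Y 0 (\<lambda>_. undefined))" and sets: "sets (\<sigma>Y 0 (\<lambda>_. undefined)) = sets SY"
    using behavioral_strategy_in_prob_algebra[OF \<sigma>Y, of "\<lambda>_. undefined" 0]
    by (simp_all add: hist_space_def space_PiM space_prob_algebra)
  moreover have "space (\<sigma>Y 0 (\<lambda>_. undefined)) = space SY"
    using sets by (rule sets_eq_imp_space_eq)
  ultimately obtain y where y: "y \<in> space SY"
    using prob_space.not_empty by blast
  have "(\<lambda>x. f x y) \<in> borel_measurable SX"
    using measurable_compose[OF measurable_Pair2'[OF y] measurable_f] by simp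
  then have "{x \<in> space SX. f x y \<le> f s1 y} \<in> sets SX" by measurable
  moreover have "s1 \<in> {x \<in> space SX. f x y \<le> f s1 y}" "s2 \<notin> {x \<in> space SX. f x y \<le> f s1 y}"
    using s f_s1_less_f_s2[OF y] by auto
  ultimately show ?thesis by (intro bexI conjI)
qed

lemma
  shows prob_space_\<nu>: "prob_space (\<nu> t)"
    and sets_\<nu>: "sets (\<nu> t) = sets (SX \<Otimes>\<^sub>M SY)"
    and space_\<nu>: "space (\<nu> t) = space (SX \<Otimes>\<^sub>M SY)"
  by (rule prob_space_round_dist sets_round_dist space_round_dist behavioral_strategy_X \<sigma>Y)+

lemma integral_f_round:
  shows "integrable (\<nu> t) (\<lambda>z. f (fst z) (snd z))"
    and "(\<integral>z. f (fst z) (snd z) \<partial>\<nu> t)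
      = \<alpha> * (\<integral>z. case_prod uX z \<partial>\<nu> t) + \<beta> * (\<integral>z. case_prod uY z \<partial>\<nu> t) + \<gamma>"
proof -
  interpret prob_space "\<nu> t" by (rule prob_space_\<nu>)
  have "integrable (\<nu> t) (case_prod uX)" "integrable (\<nu> t) (case_prod uY)"
    using bounded_measurable_payoff_integral[OF uX] bounded_measurable_payoff_integral[OF uY]
      prob_space_\<nu> sets_\<nu> by metis+
  then have "integrable (\<nu> t) (\<lambda>z. \<alpha> * uX (fst z) (snd z))" "integrable (\<nu> t) (\<lambda>z. \<beta> * uY (fst z) (snd z))"
    by (simp_all add: case_prod_beta')
  then show "integrable (\<nu> t) (\<lambda>z. f (fst z) (snd z))"
    and "(\<integral>z. f (fst z) (snd z) \<partial>\<nu> t)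
      = \<alpha> * (\<integral>z. case_prod uX z \<partial>\<nu> t) + \<beta> * (\<integral>z. case_prod uY z \<partial>\<nu> t) + \<gamma>"
    by (simp_all add: f_def case_prod_beta' prob_space)
qed

context
  fixes A assumes A: "A \<in> sets SX" "s1 \<in> A" "s2 \<notin> A"
begin

text \<open>The probabilities \<open>p(s\<^sub>1, y)\<close> and \<open>p(s\<^sub>2, y)\<close> of the statement as one formula:
  the indicator supplies the extra \<open>1\<close> exactly at \<open>s\<^sub>1\<close>.\<close>
definition next_prob :: "'x \<Rightarrow> 'y \<Rightarrow> real" where
  "next_prob x y = (\<phi> * f x y - (1 - lam) * p0 + indicator A x) / lam"

lemma K_eq_two_point:
  assumes "x \<in> {s1, s2}" "y \<in> space SY"
  shows "K (x, y) = two_point SX (next_prob x y) s1 s2"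
proof -
  have "next_prob s1 y = (\<phi> * f s1 y - (1 - lam) * p0 + 1) / lam"
    "next_prob s2 y = (\<phi> * f s2 y - (1 - lam) * p0) / lam"
    using A(2,3) by (simp_all add: next_prob_def)
  then show ?thesis using assms K1 K2 by auto
qed

lemma next_prob_bounds:
  assumes x: "x \<in> {s1, s2}" and y: "y \<in> space SY"
  shows "0 \<le> next_prob x y" "next_prob x y \<le> 1"
proof -
  let ?N = "\<phi> * f x y - (1 - lam) * p0 + indicator A x"
  have scale: "c / \<phi> \<le> d \<Longrightarrow> c \<le> \<phi> * d" "d \<le> c / \<phi> \<Longrightarrow> \<phi> * d \<le> c" for c d
    using mult_left_mono[of "c / \<phi>" d \<phi>] mult_left_mono[of d "c / \<phi>" \<phi>] phi by simp_all
  have b: "- (1 - (1 - lam) * p0) / \<phi> \<le> f s1 y" "f s1 y \<le> - ((1 - lam) * (1 - p0)) / \<phi>"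
    "(1 - lam) * p0 / \<phi> \<le> f s2 y" "f s2 y \<le> (lam + (1 - lam) * p0) / \<phi>"
    using f1 f2 y by blast+
  note scale(1)[OF b(1)] scale(2)[OF b(2)] scale(1)[OF b(3)] scale(2)[OF b(4)]
  moreover have "(1 - lam) * (1 - p0) = (1 - lam) - (1 - lam) * p0" by (simp add: algebra_simps)
  moreover have "?N = \<phi> * f s1 y - (1 - lam) * p0 + 1 \<or> ?N = \<phi> * f s2 y - (1 - lam) * p0"
    using x A(2,3) by auto
  ultimately have "0 \<le> ?N" "?N \<le> lam" by linarith+
  then show "0 \<le> next_prob x y" "next_prob x y \<le> 1"
    unfolding next_prob_def using lam(1) by (simp_all add: divide_le_eq_1_pos)
qed

lemma outer_measure_one_rounds: "outer_measure_one (\<nu> t) {z. fst z \<in> {s1, s2}}"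
proof (rule outer_measure_one_round_dist_memory_one[OF initial_in_prob_algebra K_kernel \<sigma>Y])
  show "outer_measure_one (two_point SX p0 s1 s2) {s1, s2}"
    using p0 s by (rule outer_measure_one_two_point)
  show "outer_measure_one (K (x, y)) {s1, s2}" if "x \<in> {s1, s2}" "y \<in> space SY" for x y
    using next_prob_bounds[OF that] s
    by (simp add: K_eq_two_point[OF that] outer_measure_one_two_point)
qed

lemma measure_round_Suc:
  "measure (\<nu> (Suc t)) (A \<times> space SY) = (\<integral>z. next_prob (fst z) (snd z) \<partial>\<nu> t)"
proof -
  note sets_\<nu> = sets_round_dist[OF behavioral_strategy_X \<sigma>Y]
  have meas_K: "(\<lambda>z. measure (K z) A) \<in> borel_measurable (SX \<Otimes>\<^sub>M SY)"
    using measurable_compose[OF K_kernel measurable_measure_prob_algebra[OF A(1)]] .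
  have meas_p: "(\<lambda>z. next_prob (fst z) (snd z)) \<in> borel_measurable (SX \<Otimes>\<^sub>M SY)"
    unfolding next_prob_def using A(1) by measurable
  have "(\<lambda>z. measure (K z) A) \<in> borel_measurable (\<nu> t)"
    "(\<lambda>z. next_prob (fst z) (snd z)) \<in> borel_measurable (\<nu> t)"
    using meas_K meas_p by (simp_all only: measurable_cong_sets[OF sets_\<nu> refl])
  moreover have "AE z in \<nu> t. measure (K z) A = next_prob (fst z) (snd z)"
  proof (rule AE_outer_measure_one[OF prob_space_round_dist[OF behavioral_strategy_X \<sigma>Y] outer_measure_one_rounds])
    show "{z \<in> space (\<nu> t). measure (K z) A = next_prob (fst z) (snd z)} \<in> sets (\<nu> t)"
      unfolding sets_\<nu> space_round_dist[OF behavioral_strategy_X \<sigma>Y] using meas_K meas_p by measurable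
    fix z assume "z \<in> {z. fst z \<in> {s1, s2}}" "z \<in> space (\<nu> t)"
    then have "fst z \<in> {s1, s2}" "snd z \<in> space SY"
      by (auto simp: space_round_dist[OF behavioral_strategy_X \<sigma>Y] space_pair_measure)
    then show "measure (K z) A = next_prob (fst z) (snd z)"
      using K_eq_two_point next_prob_bounds A by (cases z) (auto simp: measure_two_point)
  qed
  ultimately show ?thesis
    unfolding measure_round_dist_memory_one_Suc[OF initial_in_prob_algebra K_kernel \<sigma>Y A(1)]
    by (rule integral_cong_AE)
qed

lemma integral_f_round_identity:
  "\<phi> * (\<integral>z. f (fst z) (snd z) \<partial>\<nu> t)
    = lam * measure (\<nu> (Suc t)) (A \<times> space SY) - measure (\<nu> t) (A \<times> space SY) + (1 - lam) * p0"
proof -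
  interpret prob_space "\<nu> t" by (rule prob_space_\<nu>)
  let ?I = "indicator (A \<times> space SY) :: 'x \<times> 'y \<Rightarrow> real"
  have int_I: "integrable (\<nu> t) ?I"
    using A(1) by (intro integrable_real_indicator) (simp_all add: sets_\<nu> emeasure_eq_measure)
  have "lam * measure (\<nu> (Suc t)) (A \<times> space SY) = (\<integral>z. lam * next_prob (fst z) (snd z) \<partial>\<nu> t)"
    by (simp add: measure_round_Suc)
  also have "\<dots> = (\<integral>z. \<phi> * f (fst z) (snd z) - (1 - lam) * p0 + ?I z \<partial>\<nu> t)"
  proof (rule Bochner_Integration.integral_cong[OF refl])
    fix z assume "z \<in> space (\<nu> t)"
    then have "indicator A (fst z) = ?I z" by (cases z) (auto simp: space_\<nu> space_pair_measure indicator_def)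
    then show "lam * next_prob (fst z) (snd z) = \<phi> * f (fst z) (snd z) - (1 - lam) * p0 + ?I z"
      using lam by (simp add: next_prob_def)
  qed
  also have "\<dots> = \<phi> * (\<integral>z. f (fst z) (snd z) \<partial>\<nu> t) - (1 - lam) * p0 + measure (\<nu> t) (A \<times> space SY)"
  proof -
    have "(A \<times> space SY) \<inter> space (\<nu> t) = A \<times> space SY"
      using sets.sets_into_space[OF A(1)] by (auto simp: space_\<nu> space_pair_measure)
    then show ?thesis using integral_f_round(1) int_I by (simp add: prob_space)
  qed
  finally show ?thesis by simp
qed

lemma payoff_identity:
  "\<alpha> * expected_payoff SX SY \<sigma>X \<sigma>Y lam uX + \<beta> * expected_payoff SX SY \<sigma>X \<sigma>Y lam uY + \<gamma> = 0"
proof -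
  obtain BX BY where
    BX: "\<And>t. \<bar>\<integral>z. case_prod uX z \<partial>\<nu> t\<bar> \<le> BX" and BY: "\<And>t. \<bar>\<integral>z. case_prod uY z \<partial>\<nu> t\<bar> \<le> BY"
    using bounded_measurable_payoff_integral[OF uX] bounded_measurable_payoff_integral[OF uY]
      prob_space_\<nu> sets_\<nu> by metis
  define E where "E t = (\<integral>z. f (fst z) (snd z) \<partial>\<nu> t)" for t
  define q where "q t = measure (\<nu> t) (A \<times> space SY)" for t
  have E_bound: "\<bar>E t\<bar> \<le> \<bar>\<alpha>\<bar> * BX + \<bar>\<beta>\<bar> * BY + \<bar>\<gamma>\<bar>" for t
  proof -
    have "\<bar>\<alpha> * (\<integral>z. case_prod uX z \<partial>\<nu> t)\<bar> \<le> \<bar>\<alpha>\<bar> * BX"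
      "\<bar>\<beta> * (\<integral>z. case_prod uY z \<partial>\<nu> t)\<bar> \<le> \<bar>\<beta>\<bar> * BY"
      using BX[of t] BY[of t] by (simp_all add: abs_mult mult_left_mono)
    then show ?thesis unfolding E_def integral_f_round(2) by arith
  qed
  have q_bound: "\<bar>q t\<bar> \<le> 1" for t
    using prob_space.prob_le_1[OF prob_space_\<nu>] by (simp add: q_def)
  have q0: "q 0 = p0"
    using measure_round_dist_memory_one_0[OF initial_in_prob_algebra K_kernel \<sigma>Y A(1)] A p0
    by (simp add: q_def measure_two_point)
  have "summable (\<lambda>t. lam ^ t * E t)"
    using lam by (intro summable_discounted[OF _ _ E_bound]) auto
  then have "\<phi> * (\<Sum>t. lam ^ t * E t) = (\<Sum>t. lam ^ t * (\<phi> * E t))"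
    by (simp add: suminf_mult[symmetric] mult.left_commute)
  also have "\<dots> = (\<Sum>t. lam ^ t * (lam * q (Suc t) - q t + (1 - lam) * p0))"
    by (simp only: E_def q_def integral_f_round_identity)
  also have "\<dots> = p0 - q 0"
    using lam by (intro suminf_discounted_telescope[OF _ _ q_bound]) auto
  also have "\<dots> = 0" using q0 by simp
  finally have "(\<Sum>t. lam ^ t * E t) = 0" using phi by simp
  moreover have "\<alpha> * expected_payoff SX SY \<sigma>X \<sigma>Y lam uX + \<beta> * expected_payoff SX SY \<sigma>X \<sigma>Y lam uY + \<gamma>
      = (1 - lam) * (\<Sum>t. lam ^ t * E t)"
    unfolding expected_payoff_def E_def integral_f_round(2) using lam BX BY
    by (intro discounted_average_affine) auto
  ultimately show ?thesis by simp
qed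

end

end

theorem corollary1:
  fixes SX :: "'x measure" and SY :: "'y measure"
    and uX uY :: "'x \<Rightarrow> 'y \<Rightarrow> real"
    and lam \<alpha> \<beta> \<gamma> p0 \<phi> :: real and s1 s2 :: 'x
    and K :: "'x \<times> 'y \<Rightarrow> 'x measure"
    and \<sigma>Y :: "nat \<Rightarrow> (nat \<Rightarrow> 'x \<times> 'y) \<Rightarrow> 'y measure"
  defines "f \<equiv> (\<lambda>s y. \<alpha> * uX s y + \<beta> * uY s y + \<gamma>)"
  assumes uX: "bounded_measurable_payoff SX SY uX"
    and uY: "bounded_measurable_payoff SX SY uY"
    and lam: "0 < lam" "lam < 1"
    and s: "s1 \<in> space SX" "s2 \<in> space SX"
    and p0: "0 \<le> p0" "p0 \<le> 1"
    and phi: "\<phi> > 0"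
    and f1: "\<forall>y\<in>space SY. - (1 - (1 - lam) * p0) / \<phi> \<le> f s1 y \<and> f s1 y \<le> - ((1 - lam) * (1 - p0)) / \<phi>"
    and f2: "\<forall>y\<in>space SY. (1 - lam) * p0 / \<phi> \<le> f s2 y \<and> f s2 y \<le> (lam + (1 - lam) * p0) / \<phi>"
    and K_kernel: "K \<in> SX \<Otimes>\<^sub>M SY \<rightarrow>\<^sub>M prob_algebra SX"
    and K1: "\<forall>y\<in>space SY. K (s1, y) = two_point SX ((\<phi> * f s1 y - (1 - lam) * p0 + 1) / lam) s1 s2"
    and K2: "\<forall>y\<in>space SY. K (s2, y) = two_point SX ((\<phi> * f s2 y - (1 - lam) * p0) / lam) s1 s2"
    and \<sigma>Y: "behavioral_strategy SX SY SY \<sigma>Y"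
  shows "\<alpha> * expected_payoff SX SY (memory_one (two_point SX p0 s1 s2) K) \<sigma>Y lam uX
       + \<beta> * expected_payoff SX SY (memory_one (two_point SX p0 s1 s2) K) \<sigma>Y lam uY + \<gamma> = 0"
proof -
  have "f = (\<lambda>s y. \<alpha> * uX s y + \<beta> * uY s y + \<gamma>)" by (simp add: f_def)
  then interpret two_action_zd_strategy SX SY uX uY lam \<alpha> \<beta> \<gamma> p0 \<phi> s1 s2 K \<sigma>Y f
    using assms by unfold_locales
  obtain A where "A \<in> sets SX" "s1 \<in> A" "s2 \<notin> A" using exists_separating_set by blast
  then show ?thesis by (rule payoff_identity)
qed

end
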